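(* Let $\mathfrak{e}_1$, $\mathfrak{e}_2$, $\mathfrak{e}_3$ be the consecutive positively oriented edges of an elementary triangle of $\mathcal{T}\mathcal{L}$. Then the zero curvature condition \[ L(\mathfrak{e}_3,\lambda)L(\mathfrak{e}_2,\lambda)L(\mathfrak{e}_1,\lambda)=I \] is equivalent to the following set of equations: \begin{equation} f_1+f_2+f_3=0,\qquad g_1+g_2+g_3=0, \end{equation} and \begin{equation} f_1g_1=f_3g_2\quad\Leftrightarrow\quad f_2g_2=f_1g_3 \quad\Leftrightarrow\quad f_3g_3=f_2g_1, \end{equation} with the understanding that $h_k=(f_kg_k)^{-1}$, $k=1,2,3$.
   Context: $\mathcal{T}\mathcal{L}$ is the regular triangular lattice with vertices $k+\ell\omega+m\omega^2$ ($k,\ell,m\in\mathbb Z$, $\omega=e^{2\pi i/3}$) and edges between vertices at distance 1. Edges of the types $(\mathfrak{z},\mathfrak{z}+1)$, $(\mathfrak{z},\mathfrak{z}+\omega)$, $(\mathfrak{z},\mathfrak{z}+\omega^2)$ are declared positively oriented; with this, each elementary triangle (e.g. $(\mathfrak{z},\mathfrak{z}+\omega,\mathfrak{z}-1)$ or $(\mathfrak{z},\mathfrak{z}+\omega^2,\mathfrak{z}-1)$) has three consecutive positively oriented edges. To every positively oriented edge $\mathfrak{e}$ is attached a triple $(f,g,h)\in\mathbb C^3$ with $fgh=1$ and the matrix \[ L(\mathfrak{e},\lambda)=(1+\lambda^3)^{-1/3}\begin{pmatrix} 1 & \lambda f & 0 \\ 0 & 1 & \lambda g \\ \lambda h & 0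 & 1\end{pmatrix}, \] an element of the twisted loop group $\{L:\mathbb C\to SL(3,\mathbb C)\,|\,L(\omega\lambda)=\Omega L(\lambda)\Omega^{-1}\}$, $\Omega=\mathrm{diag}(1,\omega,\omega^2)$. Here $(f_k,g_k,h_k)$ is the triple attached to $\mathfrak{e}_k$. *)

theory Defs
  imports "HOL-Analysis.Analysis"
begin

definition nrm :: "complex \<Rightarrow> complex" where
  "nrm lam = (1 + lam ^ 3) powr (- 1 / 3)"

definition Lmat :: "complex \<Rightarrow> complex \<Rightarrow> complex \<Rightarrow> complex \<Rightarrow> complex ^ 3 ^ 3" where
  "Lmat f g h lam =
     (let c = nrm lam in
      vector [vector [c, c * lam * f, 0],
              vector [0, c, c * lam * g],
              vector [c * lam * h, 0, c]])"

end

theory Submission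
  imports Defs
begin

text \<open>The product of the three Lax matrices is \<open>(1 + \<lambda>\<^sup>3)\<^sup>-\<^sup>1\<close> times a matrix polynomial in \<open>\<lambda>\<close>
  whose diagonal entries are \<open>1 + \<lambda>\<^sup>3 f\<^sub>3g\<^sub>2h\<^sub>1\<close> (and cyclic), whose \<open>\<lambda>\<close>-entries are the sums
  \<open>\<Sigma>f\<^sub>k\<close>, \<open>\<Sigma>g\<^sub>k\<close>, \<open>\<Sigma>h\<^sub>k\<close>, and whose \<open>\<lambda>\<^sup>2\<close>-entries are quadratic. So zero curvature amounts to nine
  \<open>\<lambda>\<close>-independent equations, which can be read off at \<open>\<lambda> = 1\<close>. Once the linear sums of the
  \<open>f\<^sub>k\<close> and \<open>g\<^sub>k\<close> vanish, each of the three relations \<open>f\<^sub>1g\<^sub>1 = f\<^sub>3g\<^sub>2\<close>, \<open>f\<^sub>2g\<^sub>2 = f\<^sub>1g\<^sub>3\<close>,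
  \<open>f\<^sub>3g\<^sub>3 = f\<^sub>2g\<^sub>1\<close> is equivalent to the vanishing of \<open>f\<^sub>1g\<^sub>3 + f\<^sub>2g\<^sub>1 + f\<^sub>2g\<^sub>3\<close>, and together
  with \<open>h\<^sub>k = (f\<^sub>kg\<^sub>k)\<^sup>-\<^sup>1\<close> they give the remaining equations.\<close>

lemma nrm_cube:
  assumes "1 + lam ^ 3 \<noteq> 0"
  shows "nrm lam ^ 3 * (1 + lam ^ 3) = 1"
proof -
  have "nrm lam ^ 3 = exp (3 * ((- 1 / 3) * ln (1 + lam ^ 3)))"
    unfolding nrm_def powr_def using assms by (simp add: exp_of_nat_mult[symmetric])
  also have "\<dots> = inverse (1 + lam ^ 3)"
    using assms by (simp add: exp_minus)
  finally show ?thesis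
    using assms by simp
qed

lemma Lmat_triple_product:
  "Lmat f3 g3 h3 lam ** Lmat f2 g2 h2 lam ** Lmat f1 g1 h1 lam =
   (let c = nrm lam ^ 3 in
    vector [vector [c * (1 + lam^3 * f3*g2*h1), c * lam * (f1+f2+f3), c * lam^2 * (f3*g2+f3*g1+f2*g1)],
            vector [c * lam^2 * (g3*h2+g3*h1+g2*h1), c * (1 + lam^3 * g3*h2*f1), c * lam * (g1+g2+g3)],
            vector [c * lam * (h1+h2+h3), c * lam^2 * (h3*f2+h3*f1+h2*f1), c * (1 + lam^3 * h3*f2*g1)]])"
  unfolding Lmat_def Let_def
  by (simp add: vec_eq_iff forall_3 matrix_matrix_mult_def sum_3)
     (simp add: algebra_simps power3_eq_cube power2_eq_square)

lemma vector3_eq_mat_1_iff: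
  "(vector [vector [a11, a12, a13], vector [a21, a22, a23], vector [a31, a32, a33]] :: 'a::zero_neq_one^3^3) = mat 1
   \<longleftrightarrow> a11 = 1 \<and> a12 = 0 \<and> a13 = 0 \<and> a21 = 0 \<and> a22 = 1 \<and> a23 = 0 \<and> a31 = 0 \<and> a32 = 0 \<and> a33 = 1"
  by (simp add: vec_eq_iff forall_3 mat_def)

definition zero_curvature_equations ::
    "complex \<Rightarrow> complex \<Rightarrow> complex \<Rightarrow> complex \<Rightarrow> complex \<Rightarrow> complex \<Rightarrow> complex \<Rightarrow> complex \<Rightarrow> complex \<Rightarrow> bool"
  where "zero_curvature_equations f1 g1 h1 f2 g2 h2 f3 g3 h3 \<longleftrightarrow>
    f3*g2*h1 = 1 \<and> g3*h2*f1 = 1 \<and> h3*f2*g1 = 1 \<and>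
    f1+f2+f3 = 0 \<and> g1+g2+g3 = 0 \<and> h1+h2+h3 = 0 \<and>
    f3*g2+f3*g1+f2*g1 = 0 \<and> g3*h2+g3*h1+g2*h1 = 0 \<and> h3*f2+h3*f1+h2*f1 = 0"

lemma Lmat_triple_product_eq_mat_1:
  assumes "zero_curvature_equations f1 g1 h1 f2 g2 h2 f3 g3 h3" and "1 + lam ^ 3 \<noteq> 0"
  shows "Lmat f3 g3 h3 lam ** Lmat f2 g2 h2 lam ** Lmat f1 g1 h1 lam = mat 1"
proof -
  have diagonal: "lam ^ 3 * f3 * g2 * h1 = lam ^ 3" "lam ^ 3 * g3 * h2 * f1 = lam ^ 3"
    "lam ^ 3 * h3 * f2 * g1 = lam ^ 3"
    using assms(1) unfolding zero_curvature_equations_def by (simp_all add: mult.assoc)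
  show ?thesis
    using assms nrm_cube[OF assms(2)]
    unfolding Lmat_triple_product Let_def vector3_eq_mat_1_iff diagonal zero_curvature_equations_def
    by simp
qed

lemma zero_curvature_equations_if_Lmat_triple_product_at_1:
  assumes "Lmat f3 g3 h3 1 ** Lmat f2 g2 h2 1 ** Lmat f1 g1 h1 1 = mat 1"
  shows "zero_curvature_equations f1 g1 h1 f2 g2 h2 f3 g3 h3"
proof -
  have "nrm 1 ^ 3 * 2 = 1"
    using nrm_cube[of 1] by simp
  then have half: "nrm 1 ^ 3 = 1 / 2"
    by (simp add: eq_divide_eq)
  show ?thesis
    using assms unfolding Lmat_triple_product Let_def half vector3_eq_mat_1_iff zero_curvature_equations_def
    by (simp add: field_simps)
qed

lemma triangle_relations_iff:
  fixes f1 f2 f3 g1 g2 g3 :: "'a::comm_ring"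
  assumes "f1 + f2 + f3 = 0" and "g1 + g2 + g3 = 0"
  shows "f1 * g1 = f3 * g2 \<longleftrightarrow> f1 * g3 + f2 * g1 + f2 * g3 = 0"
    and "f2 * g2 = f1 * g3 \<longleftrightarrow> f1 * g3 + f2 * g1 + f2 * g3 = 0"
    and "f3 * g3 = f2 * g1 \<longleftrightarrow> f1 * g3 + f2 * g1 + f2 * g3 = 0"
proof -
  have f3: "f3 = - f1 - f2" and g2: "g2 = - g1 - g3"
    using assms by (simp_all add: algebra_simps eq_neg_iff_add_eq_0)
  have "f1 * g1 - f3 * g2 = - (f1 * g3 + f2 * g1 + f2 * g3)"
    "f2 * g2 - f1 * g3 = - (f1 * g3 + f2 * g1 + f2 * g3)"
    "f3 * g3 - f2 * g1 = - (f1 * g3 + f2 * g1 + f2 * g3)"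
    unfolding f3 g2 by (simp_all add: algebra_simps)
  then show "f1 * g1 = f3 * g2 \<longleftrightarrow> f1 * g3 + f2 * g1 + f2 * g3 = 0"
    "f2 * g2 = f1 * g3 \<longleftrightarrow> f1 * g3 + f2 * g1 + f2 * g3 = 0"
    "f3 * g3 = f2 * g1 \<longleftrightarrow> f1 * g3 + f2 * g1 + f2 * g3 = 0"
    by (metis eq_iff_diff_eq_0 neg_equal_0_iff_equal)+
qed

lemma zero_curvature_equations_iff:
  fixes f1 g1 h1 f2 g2 h2 f3 g3 h3 :: complex
  assumes h1: "f1 * g1 * h1 = 1" and h2: "f2 * g2 * h2 = 1" and h3: "f3 * g3 * h3 = 1"
  shows "zero_curvature_equations f1 g1 h1 f2 g2 h2 f3 g3 h3 \<longleftrightarrow>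
    f1 + f2 + f3 = 0 \<and> g1 + g2 + g3 = 0 \<and> f1 * g1 = f3 * g2"
proof
  assume "zero_curvature_equations f1 g1 h1 f2 g2 h2 f3 g3 h3"
  then have "f1 + f2 + f3 = 0" "g1 + g2 + g3 = 0" "f3 * g2 * h1 = f1 * g1 * h1"
    using h1 unfolding zero_curvature_equations_def by simp_all
  moreover have "h1 \<noteq> 0"
    using h1 by auto
  ultimately show "f1 + f2 + f3 = 0 \<and> g1 + g2 + g3 = 0 \<and> f1 * g1 = f3 * g2"
    by simp
next
  assume "f1 + f2 + f3 = 0 \<and> g1 + g2 + g3 = 0 \<and> f1 * g1 = f3 * g2"
  then have sums: "f1 + f2 + f3 = 0" "g1 + g2 + g3 = 0" and r1: "f1 * g1 = f3 * g2"
    by simp_all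
  have S: "f1 * g3 + f2 * g1 + f2 * g3 = 0"
    using r1 triangle_relations_iff(1)[OF sums] by simp
  have r2: "f2 * g2 = f1 * g3" and r3: "f3 * g3 = f2 * g1"
    using S triangle_relations_iff(2,3)[OF sums] by simp_all
  have nz: "f1 \<noteq> 0" "f2 \<noteq> 0" "g1 \<noteq> 0" "g3 \<noteq> 0"
    using h1 h2 h3 r2 by auto
  have h1_eq: "h1 = 1 / (f1 * g1)" and h2_eq: "h2 = 1 / (f1 * g3)" and h3_eq: "h3 = 1 / (f2 * g1)"
    using h1 h2 h3 r2 r3 nz by (simp_all add: field_simps)
  have f3: "f3 = - f1 - f2" and g2: "g2 = - g1 - g3"
    using sums by (simp_all add: algebra_simps eq_neg_iff_add_eq_0)
  show "zero_curvature_equations f1 g1 h1 f2 g2 h2 f3 g3 h3"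
    unfolding zero_curvature_equations_def
    using sums S nz unfolding h1_eq h2_eq h3_eq f3 g2
    by (simp add: field_simps)
qed

theorem theorem7:
  fixes f1 g1 h1 f2 g2 h2 f3 g3 h3 :: complex
  assumes "f1 * g1 * h1 = 1" and "f2 * g2 * h2 = 1" and "f3 * g3 * h3 = 1"
  defines "ZC \<equiv> (\<forall>lam::complex. 1 + lam ^ 3 \<noteq> 0 \<longrightarrow>
              Lmat f3 g3 h3 lam ** Lmat f2 g2 h2 lam ** Lmat f1 g1 h1 lam = mat 1)"
  shows "(ZC \<longleftrightarrow> f1 + f2 + f3 = 0 \<and> g1 + g2 + g3 = 0 \<and> f1 * g1 = f3 * g2)
       \<and> (ZC \<longleftrightarrow> f1 + f2 + f3 = 0 \<and> g1 + g2 + g3 = 0 \<and> f2 * g2 = f1 * g3)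
       \<and> (ZC \<longleftrightarrow> f1 + f2 + f3 = 0 \<and> g1 + g2 + g3 = 0 \<and> f3 * g3 = f2 * g1)"
proof -
  have "ZC \<longleftrightarrow> zero_curvature_equations f1 g1 h1 f2 g2 h2 f3 g3 h3"
  proof
    assume ZC
    then show "zero_curvature_equations f1 g1 h1 f2 g2 h2 f3 g3 h3"
      unfolding ZC_def by (simp add: zero_curvature_equations_if_Lmat_triple_product_at_1)
  qed (simp add: ZC_def Lmat_triple_product_eq_mat_1)
  also have "\<dots> \<longleftrightarrow> f1 + f2 + f3 = 0 \<and> g1 + g2 + g3 = 0 \<and> f1 * g1 = f3 * g2"
    using zero_curvature_equations_iff[OF assms(1-3)] .
  finally show ?thesis
    using triangle_relations_iff[of f1 f2 f3 g1 g2 g3] by auto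
qed

end
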